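(* Let $W(x)=e^{-x^2}Z(x)$, $x\in\mathbb{R}$, be an $N\times N$ Hermite-type weight matrix such that $W(x)=W(-x)$, and let $V(y)=y^{-1/2}e^{-y}Z(\sqrt{y})$ on $(0,\infty)$. Let $A_1,A_0$ be constant $N\times N$ matrices such that $D=\frac{d^2}{dx^2}I+\frac{d}{dx}A_1x+A_0\in\mathcal{D}(W)$. Then, under the change of variables $y=x^2$, the transformed operator $$\tilde D=4\frac{d^2}{dy^2}\,yI+2\frac{d}{dy}\big(A_1y+I\big)+A_0$$ belongs to $\mathcal{D}(V)$.
   Context: An $N\times N$ weight matrix on an interval $I$ is integrable, positive definite a.e., with exponential decay at infinity and finite moments; it defines $\langle P,Q\rangle_W=\int_I P(x)W(x)Q(x)^*dx$ and a unique sequence of monic orthogonal matrix polynomials $\{P_n\}_{n\ge0}$. Differential operators $\sum_i \frac{d^i}{dx^i}F_i(x)$ act on the right: $P\cdot\sum_i \frac{d^i}{dx^i}F_i=\sum_i P^{(i)}F_i$. $\mathcal{D}(W)$ is the algebra of such operators with matrix polynomial coefficients for which there are constant matrices $\Lambda_n$ with $P_n\cdot D=\Lambda_nP_n$ for all $n$. The transformed operator $\tilde D$ is defined by $(F\cdot D)(\sqrt y)=(\tilde F\cdot\tilde D)(y)$ with $\tilde F(y)=F(\sqrt y)$. Hermite-type weight: weight on $\mathbb{R}$ of the form $e^{-x^2}Z(x)$. *)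

theory Defs
  imports "HOL-Analysis.Analysis"
begin

text \<open>N x N complex matrices are modelled as complex^'n^'n for a finite index type 'n
  (N = CARD('n), arbitrary). Matrix-valued functions of a real variable.\<close>

type_synonym 'n cmat = "complex^'n^'n"

definition cadj :: "'n::finite cmat \<Rightarrow> 'n cmat" where
  "cadj A = (\<chi> i j. cnj (A $ j $ i))"

definition pos_def_mat :: "'n::finite cmat \<Rightarrow> bool" where
  "pos_def_mat A \<longleftrightarrow> cadj A = A \<and>
     (\<forall>v::complex^'n. v \<noteq> 0 \<longrightarrow> 0 < Re (\<Sum>i\<in>UNIV. cnj (v $ i) * (A *v v) $ i))"

definition is_mpoly :: "(real \<Rightarrow> 'n::finite cmat) \<Rightarrow> bool" where
  "is_mpoly f \<longleftrightarrow> (\<exists>(n::nat) (C::nat \<Rightarrow> 'n cmat). \<forall>x. f x = (\<Sum>k\<le>n. x ^ k *\<^sub>R C k))"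

definition monic_deg :: "nat \<Rightarrow> (real \<Rightarrow> 'n::finite cmat) \<Rightarrow> bool" where
  "monic_deg n f \<longleftrightarrow> (\<exists>C::nat \<Rightarrow> 'n cmat. C n = mat 1 \<and> (\<forall>x. f x = (\<Sum>k\<le>n. x ^ k *\<^sub>R C k)))"

definition weight_matrix :: "real set \<Rightarrow> (real \<Rightarrow> 'n::finite cmat) \<Rightarrow> bool" where
  "weight_matrix I W \<longleftrightarrow>
     is_interval I \<and>
     set_integrable lborel I W \<and>
     (AE x in lborel. x \<in> I \<longrightarrow> pos_def_mat (W x)) \<and>
     (\<exists>c C R. 0 < c \<and> (\<forall>x\<in>I. R \<le> \<bar>x\<bar> \<longrightarrow> norm (W x) \<le> C * exp (- c * \<bar>x\<bar>))) \<and>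
     (\<forall>k::nat. set_integrable lborel I (\<lambda>x. x ^ k *\<^sub>R W x))"

definition minner :: "(real \<Rightarrow> 'n::finite cmat) \<Rightarrow> real set \<Rightarrow>
    (real \<Rightarrow> 'n cmat) \<Rightarrow> (real \<Rightarrow> 'n cmat) \<Rightarrow> 'n cmat" where
  "minner W I P Q = (LINT x:I|lborel. P x ** W x ** cadj (Q x))"

definition monic_OMP :: "(real \<Rightarrow> 'n::finite cmat) \<Rightarrow> real set \<Rightarrow>
    (nat \<Rightarrow> real \<Rightarrow> 'n cmat) \<Rightarrow> bool" where
  "monic_OMP W I P \<longleftrightarrow> (\<forall>n. monic_deg n (P n)) \<and>
     (\<forall>n m. n \<noteq> m \<longrightarrow> minner W I (P n) (P m) = 0)"

text \<open>Differential operators acting on the right: D = [F_0, F_1, ...] stands for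
  sum_i (d/dx)^i F_i, and P . D = sum_i P^(i) F_i.\<close>
definition mderiv :: "(real \<Rightarrow> 'n::finite cmat) \<Rightarrow> real \<Rightarrow> 'n cmat" where
  "mderiv f = (\<lambda>x. vector_derivative f (at x))"

definition op_apply :: "(real \<Rightarrow> 'n::finite cmat) \<Rightarrow> (real \<Rightarrow> 'n cmat) list \<Rightarrow> real \<Rightarrow> 'n cmat" where
  "op_apply P D = (\<lambda>x. \<Sum>i<length D. (mderiv ^^ i) P x ** (D ! i) x)"

definition in_DW :: "(real \<Rightarrow> 'n::finite cmat) \<Rightarrow> real set \<Rightarrow> (real \<Rightarrow> 'n cmat) list \<Rightarrow> bool" where
  "in_DW W I D \<longleftrightarrow> (\<forall>i<length D. is_mpoly (D ! i)) \<and>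
     (\<forall>P. monic_OMP W I P \<longrightarrow> (\<forall>n. \<exists>\<Lambda>::'n cmat. \<forall>x. op_apply (P n) D x = \<Lambda> ** P n x))"

end

theory Submission
  imports Defs "HOL-Computational_Algebra.Polynomial"
begin

text \<open>Let \<open>P\<^sub>n\<close> be monic orthogonal polynomials for \<open>V\<close> on \<open>(0, \<infinity>)\<close>.
  Substituting \<open>y = x\<^sup>2\<close> and using that \<open>W\<close> is even, the polynomials
  \<open>P\<^sub>n (x\<^sup>2)\<close> are orthogonal for \<open>W\<close>; being even, they are also orthogonal to
  every odd polynomial, so interleaving them with the odd Gram--Schmidt polynomials of \<open>W\<close>
  gives a monic orthogonal sequence for \<open>W\<close>. Hence \<open>D\<close> has the eigenfunctions
  \<open>P\<^sub>n (x\<^sup>2)\<close>. By the chain rule, applying \<open>D\<close> to \<open>P\<^sub>n (x\<^sup>2)\<close> is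
  applying the transformed operator to \<open>P\<^sub>n\<close> and evaluating at \<open>x\<^sup>2\<close>. So the
  eigenvalue equation for \<open>P\<^sub>n\<close> holds on \<open>(0, \<infinity>)\<close>, and therefore everywhere
  since both sides are polynomials.\<close>

lemma cadj_add: "cadj (A + B) = cadj A + cadj (B::'n::finite cmat)"
  by (simp add: cadj_def vec_eq_iff)

lemma cadj_scaleR: "cadj (r *\<^sub>R A) = r *\<^sub>R cadj (A::'n::finite cmat)"
  by (simp add: cadj_def vec_eq_iff)

lemma cadj_uminus: "cadj (- A) = - cadj (A::'n::finite cmat)"
  by (simp add: cadj_def vec_eq_iff)

lemma cadj_zero [simp]: "cadj (0::'n::finite cmat) = 0"
  by (simp add: cadj_def vec_eq_iff)

lemma cadj_cadj [simp]: "cadj (cadj A) = (A::'n::finite cmat)"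
  by (simp add: cadj_def vec_eq_iff)

lemma cadj_mat_1 [simp]: "cadj (mat 1) = (mat 1::'n::finite cmat)"
  by (simp add: cadj_def vec_eq_iff mat_def)

lemma cadj_sum: "cadj (\<Sum>i\<in>I. f i) = (\<Sum>i\<in>I. cadj (f i::'n::finite cmat))"
  by (induct I rule: infinite_finite_induct) (auto simp: cadj_add)

lemma cadj_mult: "cadj (A ** B) = cadj B ** cadj (A::'n::finite cmat)"
  by (simp add: cadj_def vec_eq_iff matrix_matrix_mult_def mult.commute)

lemma matrix_add_rdistrib: "(A + B) ** C = A ** C + B ** (C::'a::semiring_1^'n^'m)"
  by (simp add: matrix_matrix_mult_def vec_eq_iff sum.distrib algebra_simps)

lemma matrix_diff_rdistrib: "(A - B) ** C = A ** C - B ** (C::'a::ring_1^'n^'m)"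
  by (simp add: matrix_matrix_mult_def vec_eq_iff sum_subtractf algebra_simps)

lemma matrix_uminus_left: "(- A) ** B = - (A ** (B::'a::ring_1^'n^'m))"
  by (simp add: matrix_matrix_mult_def vec_eq_iff sum_negf)

lemma matrix_uminus_right: "A ** (- B) = - ((A::'a::ring_1^'n^'m) ** B)"
  by (simp add: matrix_matrix_mult_def vec_eq_iff sum_negf)

lemma matrix_sum_left: "(\<Sum>i\<in>I. f i) ** (B::'a::semiring_1^'n^'m) = (\<Sum>i\<in>I. f i ** B)"
  by (induct I rule: infinite_finite_induct) (auto simp: matrix_add_rdistrib)

lemma matrix_sum_right: "(A::'a::semiring_1^'n^'m) ** (\<Sum>i\<in>I. f i) = (\<Sum>i\<in>I. A ** f i)"
  by (induct I rule: infinite_finite_induct) (auto simp: matrix_add_ldistrib)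

lemma matrix_scaleR_left: "(r *\<^sub>R A) ** B = r *\<^sub>R (A ** (B::'a::real_algebra_1^'n^'m))"
  by (simp add: scalar_matrix_assoc)

lemma matrix_scaleR_right: "(A::'a::real_algebra_1^'n^'m) ** (r *\<^sub>R B) = r *\<^sub>R (A ** B)"
  by (simp add: matrix_scalar_ac scalar_matrix_assoc)

lemma matrix_vector_mult_scaleR_left: "(r *\<^sub>R A) *v v = r *\<^sub>R (A *v (v::'a::real_algebra_1^'n))"
  by (simp add: matrix_vector_mult_def vec_eq_iff scaleR_sum_right)

lemma matrix_vector_mult_sum_left: "(\<Sum>i\<in>I. A i) *v v = (\<Sum>i\<in>I. A i *v (v::'a::semiring_1^'n))"
  by (induct I rule: infinite_finite_induct) (auto simp: matrix_vector_mult_add_rdistrib)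

lemma matrix_inv_left:
  fixes A :: "'a::field^'n^'n"
  assumes "invertible A"
  shows "matrix_inv A ** A = mat 1"
  unfolding matrix_inv_def by (rule someI2_ex) (use assms in \<open>auto simp: invertible_def\<close>)

lemma bounded_linear_matrix_sandwich:
  fixes B :: "complex^'m::finite^'p::finite" and C :: "complex^'q::finite^'n::finite"
  shows "bounded_linear (\<lambda>A::complex^'n^'m. B ** A ** C)"
proof -
  have "linear (\<lambda>A::complex^'n^'m. B ** A ** C)"
    by (rule linearI) (simp_all add: matrix_add_ldistrib matrix_add_rdistrib
        matrix_scaleR_left matrix_scaleR_right)
  then show ?thesis by (rule linear_conv_bounded_linear[THEN iffD1])
qed

lemma bounded_linear_cadj: "bounded_linear (cadj::'n::finite cmat \<Rightarrow> _)"
proof -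
  have "linear (cadj::'n cmat \<Rightarrow> _)"
    by (rule linearI) (simp_all add: cadj_add cadj_scaleR)
  then show ?thesis by (rule linear_conv_bounded_linear[THEN iffD1])
qed

definition quad_form :: "complex^'n \<Rightarrow> 'n::finite cmat \<Rightarrow> real" where
  "quad_form v A = Re (\<Sum>i\<in>UNIV. cnj (v $ i) * (A *v v) $ i)"

lemma pos_def_mat_iff_quad_form:
  "pos_def_mat A \<longleftrightarrow> cadj A = A \<and> (\<forall>v. v \<noteq> 0 \<longrightarrow> 0 < quad_form v A)"
  by (simp add: pos_def_mat_def quad_form_def)

lemma quad_form_nonneg: "pos_def_mat A \<Longrightarrow> 0 \<le> quad_form v A"
  by (cases "v = 0") (auto simp: pos_def_mat_iff_quad_form quad_form_def less_imp_le)

lemma bounded_linear_quad_form: "bounded_linear (quad_form (v::complex^'n::finite))"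
proof -
  have "linear (quad_form v)"
    by (rule linearI) (simp_all add: quad_form_def matrix_vector_mult_def sum.distrib
        ring_distribs sum_distrib_left mult_scaleR_right scaleR_sum_right[symmetric])
  then show ?thesis by (rule linear_conv_bounded_linear[THEN iffD1])
qed

lemma quad_form_sandwich:
  fixes A B :: "'n::finite cmat"
  shows "quad_form v (A ** B ** cadj A) = quad_form (cadj A *v v) B"
proof -
  have adjoint: "(\<Sum>i\<in>UNIV. cnj (v $ i) * (A *v w) $ i) = (\<Sum>j\<in>UNIV. cnj ((cadj A *v v) $ j) * w $ j)"
    for w :: "complex^'n"
  proof -
    have "(\<Sum>i\<in>UNIV. cnj (v $ i) * (A *v w) $ i) = (\<Sum>i\<in>UNIV. \<Sum>j\<in>UNIV. cnj (v $ i) * A$i$j * w$j)"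
      by (simp add: matrix_vector_mult_def sum_distrib_left mult.assoc)
    also have "\<dots> = (\<Sum>j\<in>UNIV. \<Sum>i\<in>UNIV. cnj (v $ i) * A$i$j * w$j)"
      by (rule sum.swap)
    also have "\<dots> = (\<Sum>j\<in>UNIV. cnj ((cadj A *v v) $ j) * w $ j)"
      by (simp add: matrix_vector_mult_def cadj_def sum_distrib_left sum_distrib_right cnj_sum mult.commute)
    finally show ?thesis .
  qed
  have "(A ** B ** cadj A) *v v = A *v (B *v (cadj A *v v))"
    by (simp add: matrix_vector_mul_assoc matrix_mul_assoc)
  then show ?thesis by (simp add: quad_form_def adjoint)
qed

section \<open>Matrix polynomials of bounded degree\<close>

definition mpoly_le :: "nat \<Rightarrow> (real \<Rightarrow> 'a::real_vector) \<Rightarrow> bool" where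
  "mpoly_le d f \<longleftrightarrow> (\<exists>C. \<forall>x. f x = (\<Sum>k\<le>d. x ^ k *\<^sub>R C k))"

lemma mpoly_leE:
  assumes "mpoly_le d f"
  obtains C where "f = (\<lambda>x. \<Sum>k\<le>d. x ^ k *\<^sub>R C k)"
  using assms unfolding mpoly_le_def by blast

lemma is_mpoly_iff_mpoly_le: "is_mpoly f \<longleftrightarrow> (\<exists>d. mpoly_le d f)"
  unfolding is_mpoly_def mpoly_le_def by blast

lemma monic_deg_imp_mpoly_le: "monic_deg n f \<Longrightarrow> mpoly_le n f"
  unfolding monic_deg_def mpoly_le_def by blast

lemma mpoly_le_padded_coeffs:
  assumes "mpoly_le d f" "d \<le> e"
  obtains C where "\<And>k. d < k \<Longrightarrow> C k = 0" "\<And>x. f x = (\<Sum>k\<le>e. x ^ k *\<^sub>R C k)"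
proof -
  obtain C where C: "\<And>x. f x = (\<Sum>k\<le>d. x ^ k *\<^sub>R C k)"
    using assms(1) by (auto simp: mpoly_le_def)
  define C' where "C' k = (if k \<le> d then C k else 0)" for k
  have "(\<Sum>k\<le>e. x ^ k *\<^sub>R C' k) = (\<Sum>k\<le>d. x ^ k *\<^sub>R C' k)" for x
    by (rule sum.mono_neutral_right) (use assms(2) in \<open>auto simp: C'_def\<close>)
  then have "f x = (\<Sum>k\<le>e. x ^ k *\<^sub>R C' k)" for x
    by (simp add: C C'_def)
  moreover have "C' k = 0" if "d < k" for k
    using that by (simp add: C'_def)
  ultimately show thesis using that by blast
qed

lemma mpoly_le_mono: "mpoly_le d f \<Longrightarrow> d \<le> e \<Longrightarrow> mpoly_le e f"
  by (erule mpoly_le_padded_coeffs) (auto simp: mpoly_le_def)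

lemma mpoly_le_cong: "mpoly_le d f \<Longrightarrow> (\<And>x. f x = g x) \<Longrightarrow> mpoly_le d g"
  by (simp add: mpoly_le_def)

lemma mpoly_le_zero: "mpoly_le d (\<lambda>x. 0)"
  unfolding mpoly_le_def by (auto intro!: exI[of _ "\<lambda>k. 0"])

lemma mpoly_le_add:
  assumes "mpoly_le d f" "mpoly_le d g"
  shows "mpoly_le d (\<lambda>x. f x + g x)"
proof -
  obtain C D where "\<And>x. f x = (\<Sum>k\<le>d. x ^ k *\<^sub>R C k)" "\<And>x. g x = (\<Sum>k\<le>d. x ^ k *\<^sub>R D k)"
    using assms unfolding mpoly_le_def by metis
  then have "f x + g x = (\<Sum>k\<le>d. x ^ k *\<^sub>R (C k + D k))" for x
    by (simp add: sum.distrib scaleR_right_distrib)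
  then show ?thesis unfolding mpoly_le_def by (intro exI[of _ "\<lambda>k. C k + D k"]) simp
qed

lemma mpoly_le_scaleR:
  assumes "mpoly_le d f"
  shows "mpoly_le d (\<lambda>x. c *\<^sub>R f x)"
proof -
  obtain C where "\<And>x. f x = (\<Sum>k\<le>d. x ^ k *\<^sub>R C k)"
    using assms unfolding mpoly_le_def by metis
  then have "c *\<^sub>R f x = (\<Sum>k\<le>d. x ^ k *\<^sub>R (c *\<^sub>R C k))" for x
    by (simp add: scaleR_sum_right mult.commute)
  then show ?thesis unfolding mpoly_le_def by (intro exI[of _ "\<lambda>k. c *\<^sub>R C k"]) simp
qed

lemma mpoly_le_diff: "mpoly_le d f \<Longrightarrow> mpoly_le d g \<Longrightarrow> mpoly_le d (\<lambda>x. f x - g x)"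
  using mpoly_le_add[of d f "\<lambda>x. (-1) *\<^sub>R g x"] mpoly_le_scaleR[of d g "-1"] by simp

lemma mpoly_le_sum:
  "finite I \<Longrightarrow> (\<And>i. i \<in> I \<Longrightarrow> mpoly_le d (f i)) \<Longrightarrow> mpoly_le d (\<lambda>x. \<Sum>i\<in>I. f i x)"
  by (induct I rule: finite_induct) (auto simp: mpoly_le_zero intro!: mpoly_le_add)

lemma mpoly_le_monom: "j \<le> d \<Longrightarrow> mpoly_le d (\<lambda>x. x ^ j *\<^sub>R A)"
  unfolding mpoly_le_def
  by (rule exI[of _ "\<lambda>k. if k = j then A else 0"]) (simp add: if_distrib cong: if_cong)

lemma mpoly_le_const: "mpoly_le d (\<lambda>x. A)"
  using mpoly_le_monom[of 0 d A] by simp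

lemma mpoly_le_sum_monoms:
  "finite K \<Longrightarrow> (\<And>k. k \<in> K \<Longrightarrow> e k \<le> d) \<Longrightarrow> mpoly_le d (\<lambda>x. \<Sum>k\<in>K. x ^ e k *\<^sub>R B k)"
  by (intro mpoly_le_sum mpoly_le_monom)

lemma mpoly_le_scaleR_var: "mpoly_le d f \<Longrightarrow> mpoly_le (Suc d) (\<lambda>x. x *\<^sub>R f x)"
proof -
  assume "mpoly_le d f"
  then obtain C where C: "\<And>x. f x = (\<Sum>k\<le>d. x ^ k *\<^sub>R C k)" by (auto simp: mpoly_le_def)
  have "mpoly_le (Suc d) (\<lambda>x. \<Sum>k\<le>d. x ^ Suc k *\<^sub>R C k)"
    by (rule mpoly_le_sum_monoms) auto
  then show ?thesis
    by (rule mpoly_le_cong) (simp add: C scaleR_sum_right)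
qed

lemma mpoly_le_compose_square: "mpoly_le d f \<Longrightarrow> mpoly_le (2 * d) (\<lambda>x. f (x\<^sup>2))"
proof -
  assume "mpoly_le d f"
  then obtain C where C: "\<And>x. f x = (\<Sum>k\<le>d. x ^ k *\<^sub>R C k)" by (auto simp: mpoly_le_def)
  have "mpoly_le (2 * d) (\<lambda>x. \<Sum>k\<le>d. x ^ (2 * k) *\<^sub>R C k)"
    by (rule mpoly_le_sum_monoms) auto
  then show ?thesis
    by (rule mpoly_le_cong) (simp add: C power_mult)
qed

lemma mpoly_le_mult:
  fixes f :: "real \<Rightarrow> 'a::real_algebra_1^'n^'m" and g :: "real \<Rightarrow> 'a^'p^'n"
  assumes "mpoly_le a f" "mpoly_le b g"
  shows "mpoly_le (a + b) (\<lambda>x. f x ** g x)"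
proof -
  obtain C D where C: "\<And>x. f x = (\<Sum>i\<le>a. x ^ i *\<^sub>R C i)" and D: "\<And>x. g x = (\<Sum>j\<le>b. x ^ j *\<^sub>R D j)"
    using assms unfolding mpoly_le_def by metis
  have "mpoly_le (a + b) (\<lambda>x. \<Sum>j\<le>b. \<Sum>i\<le>a. x ^ (i + j) *\<^sub>R (C i ** D j))"
    by (intro mpoly_le_sum mpoly_le_monom finite_atMost) auto
  then show ?thesis
    by (rule mpoly_le_cong) (simp add: C D matrix_sum_left matrix_sum_right matrix_scaleR_left
        matrix_scaleR_right power_add scaleR_sum_right mult.commute)
qed

lemma mpoly_le_mult_const_left:
  fixes A :: "'a::real_algebra_1^'n^'m"
  shows "mpoly_le d f \<Longrightarrow> mpoly_le d (\<lambda>x. A ** f x)"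
  using mpoly_le_mult[OF mpoly_le_const[of 0 A]] by simp

lemma monic_deg_intro:
  fixes g :: "real \<Rightarrow> 'n::finite cmat"
  assumes "mpoly_le d g" "d < n"
  shows "monic_deg n (\<lambda>x. x ^ n *\<^sub>R mat 1 - g x)"
proof -
  obtain C where C: "\<And>k. d < k \<Longrightarrow> C k = 0" "\<And>x. g x = (\<Sum>k\<le>n. x ^ k *\<^sub>R C k)"
    using mpoly_le_padded_coeffs[OF assms(1), of n] assms(2) by auto
  define E where "E k = (if k = n then mat 1 else 0) - C k" for k
  have "(\<Sum>k\<le>n. x ^ k *\<^sub>R (if k = n then mat 1 else 0)) = x ^ n *\<^sub>R (mat 1::'n cmat)" for x
    by (simp add: if_distrib cong: if_cong)
  then have "x ^ n *\<^sub>R mat 1 - g x = (\<Sum>k\<le>n. x ^ k *\<^sub>R E k)" for x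
    by (simp only: E_def C(2) scaleR_diff_right sum_subtractf)
  moreover have "E n = mat 1" using C(1) assms(2) by (simp add: E_def)
  ultimately show ?thesis unfolding monic_deg_def by (intro exI[of _ E]) simp
qed

lemma monic_deg_compose_square:
  assumes "monic_deg n p"
  shows "monic_deg (2 * n) (\<lambda>x. p (x\<^sup>2))"
proof -
  obtain C where C1: "C n = mat 1" and C: "\<And>x. p x = (\<Sum>k\<le>n. x ^ k *\<^sub>R C k)"
    using assms unfolding monic_deg_def by blast
  show ?thesis
  proof (cases n)
    case 0
    then show ?thesis using C C1 unfolding monic_deg_def by (intro exI[of _ C]) simp
  next
    case (Suc m)
    have "p (x\<^sup>2) = x ^ (2 * n) *\<^sub>R mat 1 - (- (\<Sum>k<n. x ^ (2 * k) *\<^sub>R C k))" for x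
      using C1 by (simp add: C lessThan_Suc_atMost[symmetric] power_mult[symmetric])
    moreover have "mpoly_le (2 * m) (\<lambda>x. \<Sum>k<n. x ^ (2 * k) *\<^sub>R C k)"
      by (rule mpoly_le_sum_monoms) (auto simp: Suc)
    then have "mpoly_le (2 * m) (\<lambda>x. - (\<Sum>k<n. x ^ (2 * k) *\<^sub>R C k))"
      using mpoly_le_scaleR[where c="-1"] by fastforce
    ultimately show ?thesis
      using monic_deg_intro[of "2 * m" _ "2 * n"] Suc by simp
  qed
qed

section \<open>Vanishing of polynomials\<close>

lemma poly_coeffs_eq_0_if_infinite_zeros:
  fixes C :: "nat \<Rightarrow> 'a::euclidean_space"
  assumes S: "infinite S" and zero: "\<And>x. x \<in> S \<Longrightarrow> (\<Sum>k\<le>d. x ^ k *\<^sub>R C k) = 0" and "k \<le> d"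
  shows "C k = 0"
proof (rule euclidean_eqI)
  fix b :: 'a assume "b \<in> Basis"
  define q where "q = (\<Sum>k\<le>d. monom (C k \<bullet> b) k)"
  have poly_q: "poly q x = (\<Sum>k\<le>d. x ^ k *\<^sub>R C k) \<bullet> b" for x
    by (simp add: q_def poly_sum poly_monom inner_sum_left mult.commute)
  have "q = 0"
  proof (rule ccontr)
    assume "q \<noteq> 0"
    then have "finite {x. poly q x = 0}" by (rule poly_roots_finite)
    moreover have "S \<subseteq> {x. poly q x = 0}" using zero by (auto simp: poly_q)
    ultimately show False using S finite_subset by blast
  qed
  then have "coeff q k = 0" by simp
  then show "C k \<bullet> b = 0 \<bullet> b" using \<open>k \<le> d\<close> by (simp add: q_def coeff_sum coeff_monom)
qed

lemma mpoly_le_eq_0_if_infinite_zeros: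
  fixes f :: "real \<Rightarrow> 'a::euclidean_space"
  assumes "mpoly_le d f" "infinite S" "\<And>x. x \<in> S \<Longrightarrow> f x = 0"
  shows "f x = 0"
proof -
  obtain C where C: "f = (\<lambda>x. \<Sum>k\<le>d. x ^ k *\<^sub>R C k)" using assms(1) by (rule mpoly_leE)
  have "C k = 0" if "k \<le> d" for k
    by (rule poly_coeffs_eq_0_if_infinite_zeros[OF assms(2) _ that]) (use assms(3) in \<open>simp add: C\<close>)
  then show ?thesis by (simp add: C)
qed

lemma not_AE_poly_eq_0:
  fixes C :: "nat \<Rightarrow> 'a::euclidean_space"
  assumes "C d \<noteq> 0"
  shows "\<not> (AE x in lborel. (\<Sum>k\<le>d. x ^ k *\<^sub>R C k) = 0)"
proof
  define S where "S = {x::real. (\<Sum>k\<le>d. x ^ k *\<^sub>R C k) = 0}"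
  have "finite S"
  proof (rule ccontr)
    assume "infinite S"
    then have "C d = 0"
      by (rule poly_coeffs_eq_0_if_infinite_zeros) (auto simp: S_def)
    with assms show False by simp
  qed
  then have "AE x in lborel. x \<notin> S"
    by (intro AE_not_in finite_imp_null_set_lborel)
  moreover assume "AE x in lborel. (\<Sum>k\<le>d. x ^ k *\<^sub>R C k) = 0"
  ultimately have "AE x::real in lborel. False"
    by eventually_elim (simp add: S_def)
  then show False
    by (simp add: eventually_False ae_filter_eq_bot_iff)
qed

section \<open>Differential operators and the substitution \<open>y = x\<^sup>2\<close>\<close>

lemma has_vector_derivative_poly:
  "((\<lambda>x. \<Sum>k\<le>d. x ^ k *\<^sub>R C k) has_vector_derivative (\<Sum>k\<le>d. (real k * x ^ (k - 1)) *\<^sub>R C k)) (at x)"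
proof (rule has_vector_derivative_sum)
  fix k
  show "((\<lambda>x. x ^ k *\<^sub>R C k) has_vector_derivative (real k * x ^ (k - 1)) *\<^sub>R C k) (at x)"
    using has_vector_derivative_scaleR[OF DERIV_pow[of k x] has_vector_derivative_const[of "C k"]]
    by simp
qed

lemma mderiv_poly:
  "mderiv (\<lambda>x. \<Sum>k\<le>d. x ^ k *\<^sub>R C k) = (\<lambda>x. \<Sum>k\<le>d. (real k * x ^ (k - 1)) *\<^sub>R C k)"
  unfolding mderiv_def by (intro ext vector_derivative_at has_vector_derivative_poly)

lemma mpoly_le_has_vector_derivative:
  "mpoly_le d f \<Longrightarrow> (f has_vector_derivative mderiv f x) (at x)"
  by (erule mpoly_leE) (simp only: mderiv_poly has_vector_derivative_poly)

lemma mpoly_le_mderiv: "mpoly_le d f \<Longrightarrow> mpoly_le d (mderiv f)"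
proof (erule mpoly_leE)
  fix C assume f: "f = (\<lambda>x. \<Sum>k\<le>d. x ^ k *\<^sub>R C k)"
  have "mpoly_le d (\<lambda>x. \<Sum>k\<le>d. x ^ (k - 1) *\<^sub>R (real k *\<^sub>R C k))"
    by (rule mpoly_le_sum_monoms) auto
  then show "mpoly_le d (mderiv f)"
    by (rule mpoly_le_cong) (simp add: f mderiv_poly mult.commute)
qed

lemma mpoly_le_funpow_mderiv: "mpoly_le d f \<Longrightarrow> mpoly_le d ((mderiv ^^ i) f)"
  by (induct i) (simp_all add: mpoly_le_mderiv)

lemma mpoly_le_op_apply:
  assumes "mpoly_le d f" "\<And>i. i < length D \<Longrightarrow> mpoly_le e (D ! i)"
  shows "mpoly_le (d + e) (op_apply f D)"
  unfolding op_apply_def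
  by (intro mpoly_le_sum mpoly_le_mult mpoly_le_funpow_mderiv assms) simp_all

lemma op_apply_3:
  "op_apply f [a, b, c] x = f x ** a x + mderiv f x ** b x + mderiv (mderiv f) x ** c x"
  by (simp add: op_apply_def numeral_3_eq_3 lessThan_Suc)

lemma has_vector_derivative_compose_square:
  assumes "(g has_vector_derivative g') (at (x\<^sup>2))"
  shows "((\<lambda>x. g (x\<^sup>2)) has_vector_derivative (2 * x) *\<^sub>R g') (at x)"
proof -
  have "((\<lambda>x::real. x\<^sup>2) has_vector_derivative 2 * x) (at x)"
    by (auto simp flip: has_real_derivative_iff_has_vector_derivative intro!: derivative_eq_intros)
  from vector_diff_chain_at[OF this assms] show ?thesis by (simp add: o_def)
qed

abbreviation hermite_op :: "'n::finite cmat \<Rightarrow> 'n cmat \<Rightarrow> (real \<Rightarrow> 'n cmat) list" where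
  "hermite_op A0 A1 \<equiv> [(\<lambda>x. A0), (\<lambda>x. x *\<^sub>R A1), (\<lambda>x. mat 1)]"

abbreviation laguerre_op :: "'n::finite cmat \<Rightarrow> 'n cmat \<Rightarrow> (real \<Rightarrow> 'n cmat) list" where
  "laguerre_op A0 A1 \<equiv> [(\<lambda>y. A0), (\<lambda>y. 2 *\<^sub>R (y *\<^sub>R A1 + mat 1)), (\<lambda>y. (4 * y) *\<^sub>R mat 1)]"

lemma op_apply_compose_square:
  fixes f :: "real \<Rightarrow> 'n::finite cmat"
  assumes f': "\<And>y. (f has_vector_derivative mderiv f y) (at y)"
    and f'': "\<And>y. (mderiv f has_vector_derivative mderiv (mderiv f) y) (at y)"
  shows "op_apply (\<lambda>x. f (x\<^sup>2)) (hermite_op A0 A1) x = op_apply f (laguerre_op A0 A1) (x\<^sup>2)"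
proof -
  have d1: "mderiv (\<lambda>x. f (x\<^sup>2)) = (\<lambda>x. (2 * x) *\<^sub>R mderiv f (x\<^sup>2))"
    unfolding mderiv_def[of "\<lambda>x. f (x\<^sup>2)"]
    by (intro ext vector_derivative_at has_vector_derivative_compose_square f')
  have dd: "((\<lambda>x. (2 * x) *\<^sub>R mderiv f (x\<^sup>2)) has_vector_derivative
      (2 * x) *\<^sub>R ((2 * x) *\<^sub>R mderiv (mderiv f) (x\<^sup>2)) + 2 *\<^sub>R mderiv f (x\<^sup>2)) (at x)"
    by (intro has_vector_derivative_scaleR has_vector_derivative_compose_square f''
        derivative_eq_intros) auto
  have d2: "mderiv (\<lambda>x. (2 * x) *\<^sub>R mderiv f (x\<^sup>2)) x
      = (4 * x\<^sup>2) *\<^sub>R mderiv (mderiv f) (x\<^sup>2) + 2 *\<^sub>R mderiv f (x\<^sup>2)"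
    unfolding mderiv_def[of "\<lambda>x. (2 * x) *\<^sub>R mderiv f (x\<^sup>2)"]
    by (subst vector_derivative_at[OF dd]) (simp add: power2_eq_square)
  show ?thesis
    unfolding op_apply_3 d1 d2
    by (simp add: matrix_add_ldistrib matrix_add_rdistrib matrix_scaleR_left
        matrix_scaleR_right scaleR_add_right power2_eq_square algebra_simps)
qed

lemma mpoly_le_laguerre_op_coeffs:
  "i < length (laguerre_op A0 A1) \<Longrightarrow> mpoly_le 1 (laguerre_op A0 A1 ! i)"
proof -
  have linear: "mpoly_le 1 (\<lambda>y. y *\<^sub>R A)" for A :: "'a cmat"
    using mpoly_le_scaleR_var[OF mpoly_le_const[of 0 A]] by simp
  have "mpoly_le 1 (\<lambda>y. (4 * y) *\<^sub>R (mat 1 :: 'a cmat))"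
    using linear[of "4 *\<^sub>R mat 1"] by (simp add: mult.commute)
  moreover have "mpoly_le 1 (\<lambda>y. 2 *\<^sub>R (y *\<^sub>R A1 + mat 1))"
    by (intro mpoly_le_scaleR mpoly_le_add linear mpoly_le_const)
  moreover assume "i < length (laguerre_op A0 A1)"
  then have "i = 0 \<or> i = 1 \<or> i = 2" by auto
  ultimately show ?thesis by (auto simp: mpoly_le_const)
qed

lemma op_apply_hermite_op_compose_square:
  assumes "mpoly_le d f"
  shows "op_apply (\<lambda>x. f (x\<^sup>2)) (hermite_op A0 A1) x = op_apply f (laguerre_op A0 A1) (x\<^sup>2)"
  using assms
  by (intro op_apply_compose_square mpoly_le_has_vector_derivative mpoly_le_mderiv)

lemma laguerre_op_eigen_if_hermite_op_eigen:
  assumes p: "mpoly_le d p"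
    and eigen: "\<And>x. op_apply (\<lambda>x. p (x\<^sup>2)) (hermite_op A0 A1) x = \<Lambda> ** p (x\<^sup>2)"
  shows "op_apply p (laguerre_op A0 A1) y = \<Lambda> ** p y"
proof -
  let ?g = "\<lambda>y. op_apply p (laguerre_op A0 A1) y - \<Lambda> ** p y"
  have "mpoly_le (d + 1) ?g"
    by (intro mpoly_le_diff mpoly_le_op_apply p mpoly_le_laguerre_op_coeffs mpoly_le_mult_const_left
        mpoly_le_mono[OF p]) simp_all
  moreover have "?g y = 0" if "y \<in> {0<..}" for y
    using op_apply_hermite_op_compose_square[OF p, of A0 A1 "sqrt y"] eigen[of "sqrt y"] that by simp
  ultimately show ?thesis
    using mpoly_le_eq_0_if_infinite_zeros[of "d + 1" ?g "{0<..}" y] by (simp add: infinite_Ioi)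
qed

lemma minner_UNIV: "minner W UNIV f g = (\<integral>x. f x ** W x ** cadj (g x) \<partial>lborel)"
  by (simp add: minner_def set_lebesgue_integral_def)

context
  fixes W :: "real \<Rightarrow> 'n::finite cmat"
  assumes moments: "\<And>k. integrable lborel (\<lambda>x. x ^ k *\<^sub>R W x)"
begin

lemma integrable_mpoly_sandwich:
  assumes "mpoly_le a f" "mpoly_le b g"
  shows "integrable lborel (\<lambda>x. f x ** W x ** cadj (g x))"
proof -
  obtain C D where C: "\<And>x. f x = (\<Sum>i\<le>a. x ^ i *\<^sub>R C i)" and D: "\<And>x. g x = (\<Sum>j\<le>b. x ^ j *\<^sub>R D j)"
    using assms unfolding mpoly_le_def by metis
  have "f x ** W x ** cadj (g x) = (\<Sum>i\<le>a. \<Sum>j\<le>b. C i ** (x ^ (i + j) *\<^sub>R W x) ** cadj (D j))" for x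
    by (simp add: C D matrix_sum_left matrix_sum_right cadj_sum cadj_scaleR matrix_scaleR_left
        matrix_scaleR_right power_add scaleR_sum_right sum.swap[of _ "{..b}"] mult.commute)
  moreover have "integrable lborel (\<lambda>x. C i ** (x ^ (i + j) *\<^sub>R W x) ** cadj (D j))" for i j
    using integrable_bounded_linear[OF bounded_linear_matrix_sandwich[of "C i" "cadj (D j)"] moments[of "i + j"]] .
  then have "integrable lborel (\<lambda>x. \<Sum>i\<le>a. \<Sum>j\<le>b. C i ** (x ^ (i + j) *\<^sub>R W x) ** cadj (D j))"
    by (intro Bochner_Integration.integrable_sum)
  ultimately show ?thesis by simp
qed

lemma minner_diff_sum_left:
  assumes f: "mpoly_le a f" and h: "mpoly_le b h" and g: "\<And>k. k < n \<Longrightarrow> mpoly_le c (g k)"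
  shows "minner W UNIV (\<lambda>x. f x - (\<Sum>k<n. B k ** g k x)) h
       = minner W UNIV f h - (\<Sum>k<n. B k ** minner W UNIV (g k) h)"
proof -
  let ?I = "\<lambda>f x. f x ** W x ** cadj (h x)"
  have integrable: "integrable lborel (\<lambda>x. B k ** ?I (g k) x)" if "k < n" for k
    using integrable_bounded_linear[OF bounded_linear_matrix_sandwich[of "B k" "mat 1"]
        integrable_mpoly_sandwich[OF g[OF that] h]] by simp
  have "(f x - (\<Sum>k<n. B k ** g k x)) ** W x ** cadj (h x) = ?I f x - (\<Sum>k<n. B k ** ?I (g k) x)" for x
    by (simp add: matrix_diff_rdistrib matrix_sum_left matrix_mul_assoc)
  moreover have "integrable lborel (\<lambda>x. \<Sum>k<n. B k ** ?I (g k) x)"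
    by (intro Bochner_Integration.integrable_sum integrable) simp
  ultimately have "minner W UNIV (\<lambda>x. f x - (\<Sum>k<n. B k ** g k x)) h
      = (\<integral>x. ?I f x \<partial>lborel) - (\<integral>x. (\<Sum>k<n. B k ** ?I (g k) x) \<partial>lborel)"
    unfolding minner_UNIV
    using Bochner_Integration.integral_diff[OF integrable_mpoly_sandwich[OF f h]] by presburger
  also have "(\<integral>x. (\<Sum>k<n. B k ** ?I (g k) x) \<partial>lborel) = (\<Sum>k<n. \<integral>x. B k ** ?I (g k) x \<partial>lborel)"
    by (intro Bochner_Integration.integral_sum integrable) simp
  also have "\<dots> = (\<Sum>k<n. B k ** minner W UNIV (g k) h)"
  proof (rule sum.cong[OF refl])
    fix k assume "k \<in> {..<n}"
    then show "(\<integral>x. B k ** ?I (g k) x \<partial>lborel) = B k ** minner W UNIV (g k) h"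
      using integral_bounded_linear[OF bounded_linear_matrix_sandwich[of "B k" "mat 1"]
          integrable_mpoly_sandwich[OF g h]]
      by (simp add: minner_UNIV)
  qed
  finally show ?thesis by (simp add: minner_UNIV)
qed

lemma minner_swap:
  assumes herm: "AE x in lborel. cadj (W x) = W x" and f: "mpoly_le a f" and g: "mpoly_le b g"
  shows "minner W UNIV g f = cadj (minner W UNIV f g)"
proof -
  have "cadj (minner W UNIV f g) = (\<integral>x. cadj (f x ** W x ** cadj (g x)) \<partial>lborel)"
    unfolding minner_UNIV
    by (rule integral_bounded_linear[OF bounded_linear_cadj integrable_mpoly_sandwich[OF f g], symmetric])
  also have "\<dots> = (\<integral>x. g x ** W x ** cadj (f x) \<partial>lborel)"
  proof (rule integral_cong_AE)
    show "(\<lambda>x. cadj (f x ** W x ** cadj (g x))) \<in> borel_measurable lborel"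
      using integrable_bounded_linear[OF bounded_linear_cadj integrable_mpoly_sandwich[OF f g]] by auto
    show "(\<lambda>x. g x ** W x ** cadj (f x)) \<in> borel_measurable lborel"
      using integrable_mpoly_sandwich[OF g f] by auto
    show "AE x in lborel. cadj (f x ** W x ** cadj (g x)) = g x ** W x ** cadj (f x)"
      using herm by eventually_elim (simp add: cadj_mult matrix_mul_assoc)
  qed
  finally show ?thesis by (simp add: minner_UNIV)
qed

context
  assumes pos_def: "AE x in lborel. pos_def_mat (W x)"
begin

lemma AE_cadj_mult_vec_eq_0_if_quad_form_eq_0:
  assumes f: "mpoly_le d f" and zero: "quad_form v (minner W UNIV f f) = 0"
  shows "AE x in lborel. cadj (f x) *v v = 0"
proof -
  let ?F = "\<lambda>x. f x ** W x ** cadj (f x)"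
  have integrable: "integrable lborel (\<lambda>x. quad_form v (?F x))"
    by (rule integrable_bounded_linear[OF bounded_linear_quad_form integrable_mpoly_sandwich[OF f f]])
  have "(\<integral>x. quad_form v (?F x) \<partial>lborel) = 0"
    using zero integral_bounded_linear[OF bounded_linear_quad_form integrable_mpoly_sandwich[OF f f]]
    by (simp add: minner_UNIV)
  moreover have "AE x in lborel. 0 \<le> quad_form v (?F x)"
    using pos_def by eventually_elim (simp add: quad_form_sandwich quad_form_nonneg)
  ultimately have "AE x in lborel. quad_form (cadj (f x) *v v) (W x) = 0"
    using integrable by (simp add: integral_nonneg_eq_0_iff_AE quad_form_sandwich)
  with pos_def show ?thesis
    by eventually_elim (auto simp: pos_def_mat_iff_quad_form)
qed

lemma invertible_minner_monic:
  assumes "monic_deg d f"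
  shows "invertible (minner W UNIV f f)"
proof -
  obtain C where C1: "C d = mat 1" and C: "\<And>x. f x = (\<Sum>k\<le>d. x ^ k *\<^sub>R C k)"
    using assms unfolding monic_deg_def by blast
  have "v = 0" if "minner W UNIV f f *v v = 0" for v
  proof (rule ccontr)
    assume "v \<noteq> 0"
    have "quad_form v (minner W UNIV f f) = 0"
      using that by (simp add: quad_form_def)
    then have "AE x in lborel. (\<Sum>k\<le>d. x ^ k *\<^sub>R (cadj (C k) *v v)) = 0"
      using AE_cadj_mult_vec_eq_0_if_quad_form_eq_0[OF monic_deg_imp_mpoly_le[OF assms]]
      by (simp add: C cadj_sum cadj_scaleR matrix_vector_mult_sum_left matrix_vector_mult_scaleR_left)
    with \<open>v \<noteq> 0\<close> show False using not_AE_poly_eq_0[of "\<lambda>k. cadj (C k) *v v" d] C1 by simp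
  qed
  then show ?thesis
    using matrix_left_invertible_ker invertible_left_inverse by blast
qed

end

end

section \<open>Odd monic orthogonal polynomials\<close>

text \<open>Gram--Schmidt orthogonalisation of the odd monomials \<open>x ^ (2 * n + 1)\<close> with
  respect to \<open>W\<close>. The Gram matrices inverted here are invertible only when \<open>W\<close> is
  almost everywhere positive definite (\<open>invertible_minner_monic\<close>); otherwise
  \<open>matrix_inv\<close> yields an arbitrary matrix.\<close>

function odd_omp :: "(real \<Rightarrow> 'n::finite cmat) \<Rightarrow> nat \<Rightarrow> real \<Rightarrow> 'n cmat" where
  "odd_omp W n = (\<lambda>x. x ^ (2 * n + 1) *\<^sub>R mat 1 -
     (\<Sum>k<n. (minner W UNIV (\<lambda>t. t ^ (2 * n + 1) *\<^sub>R mat 1) (odd_omp W k)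
              ** matrix_inv (minner W UNIV (odd_omp W k) (odd_omp W k))) ** odd_omp W k x))"
  by pat_completeness auto
termination by (relation "Wellfounded.measure snd") auto

declare odd_omp.simps [simp del]

lemma mpoly_le_odd_omp: "mpoly_le (2 * n + 1) (odd_omp W n)"
proof (induct n rule: less_induct)
  case (less n)
  have "mpoly_le (2 * n + 1) (odd_omp W k)" if "k < n" for k
    by (rule mpoly_le_mono[OF less[OF that]]) (use that in simp)
  then show ?case
    by (subst odd_omp.simps)
      (intro mpoly_le_diff mpoly_le_monom mpoly_le_sum mpoly_le_mult_const_left finite_lessThan; simp)
qed

lemma mpoly_le_odd_omp_less: "k < n \<Longrightarrow> mpoly_le (2 * n) (odd_omp W k)"
  by (rule mpoly_le_mono[OF mpoly_le_odd_omp]) simp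

lemma monic_deg_odd_omp: "monic_deg (2 * n + 1) (odd_omp W n)"
  by (subst odd_omp.simps, rule monic_deg_intro[where d="2 * n"])
    (auto intro!: mpoly_le_sum mpoly_le_mult_const_left mpoly_le_odd_omp_less)

lemma odd_omp_uminus: "odd_omp W n (- x) = - odd_omp W n x"
proof (induct n rule: less_induct)
  case (less n)
  then show ?case
    by (subst (1 2) odd_omp.simps) (simp add: matrix_uminus_right sum_negf)
qed

context
  fixes W :: "real \<Rightarrow> 'n::finite cmat"
  assumes moments: "\<And>k. integrable lborel (\<lambda>x. x ^ k *\<^sub>R W x)"
    and pos_def: "AE x in lborel. pos_def_mat (W x)"
begin

lemma minner_odd_omp_swap:
  "minner W UNIV (odd_omp W m) (odd_omp W n) = cadj (minner W UNIV (odd_omp W n) (odd_omp W m))"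
proof -
  have "AE x in lborel. cadj (W x) = W x"
    using pos_def by eventually_elim (simp add: pos_def_mat_def)
  then show ?thesis by (rule minner_swap[OF moments _ mpoly_le_odd_omp mpoly_le_odd_omp])
qed

lemma odd_omp_orthogonal_less: "j < n \<Longrightarrow> minner W UNIV (odd_omp W n) (odd_omp W j) = 0"
proof (induct n arbitrary: j rule: less_induct)
  case (less n)
  define a where "a k = minner W UNIV (\<lambda>t. t ^ (2 * n + 1) *\<^sub>R mat 1) (odd_omp W k)" for k
  define G where "G k = minner W UNIV (odd_omp W k) (odd_omp W k)" for k
  have orth: "minner W UNIV (odd_omp W k) (odd_omp W j) = 0" if "k < n" "k \<noteq> j" for k
    using less(1)[OF that(1)] less(1)[OF less(2)] that minner_odd_omp_swap[of k j]
    by (cases "j < k") auto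
  have "minner W UNIV (odd_omp W n) (odd_omp W j)
      = a j - (\<Sum>k<n. (a k ** matrix_inv (G k)) ** minner W UNIV (odd_omp W k) (odd_omp W j))"
    unfolding a_def G_def
    by (subst odd_omp.simps[of W n], rule minner_diff_sum_left[OF moments mpoly_le_monom[OF order_refl]
          mpoly_le_odd_omp mpoly_le_odd_omp_less])
  also have "(\<Sum>k<n. (a k ** matrix_inv (G k)) ** minner W UNIV (odd_omp W k) (odd_omp W j))
      = (\<Sum>k<n. if k = j then (a j ** matrix_inv (G j)) ** G j else 0)"
    by (rule sum.cong) (auto simp: orth G_def)
  also have "\<dots> = (a j ** matrix_inv (G j)) ** G j"
    using less(2) by simp
  also have "\<dots> = a j"
    using matrix_inv_left[OF invertible_minner_monic[OF moments pos_def monic_deg_odd_omp]]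
    by (simp add: G_def flip: matrix_mul_assoc)
  finally show ?case by simp
qed

lemma odd_omp_orthogonal: "m \<noteq> n \<Longrightarrow> minner W UNIV (odd_omp W n) (odd_omp W m) = 0"
  using odd_omp_orthogonal_less[of m n] odd_omp_orthogonal_less[of n m] minner_odd_omp_swap[of n m]
  by (cases "m < n") auto

end

section \<open>Even weights\<close>

lemma lborel_integral_odd_eq_0:
  fixes f :: "real \<Rightarrow> 'a::{banach, second_countable_topology}"
  assumes "\<And>x. f (- x) = - f x"
  shows "(\<integral>x. f x \<partial>lborel) = 0"
proof -
  have "(\<integral>x. f x \<partial>lborel) = \<bar>-1::real\<bar> *\<^sub>R (\<integral>x. f (0 + (-1) * x) \<partial>lborel)"
    by (rule lborel_integral_real_affine) simp
  also have "\<dots> = - (\<integral>x. f x \<partial>lborel)"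
    using assms by simp
  finally have "(2::real) *\<^sub>R (\<integral>x. f x \<partial>lborel) = 0"
    by (simp add: scaleR_2 eq_neg_iff_add_eq_0)
  then show ?thesis by simp
qed

lemma lborel_integral_even:
  fixes f :: "real \<Rightarrow> 'a::{banach, second_countable_topology}"
  assumes f: "integrable lborel f" and even: "\<And>x. f (- x) = f x"
  shows "(\<integral>x. f x \<partial>lborel) = 2 *\<^sub>R (LINT x:{0<..}|lborel. f x)"
proof -
  let ?P = "\<lambda>x. indicator {0<..} x *\<^sub>R f x"
  let ?N = "\<lambda>x. indicator {..<0} x *\<^sub>R f x"
  let ?Z = "\<lambda>x. indicator {0} x *\<^sub>R f x"
  have split: "f x = ?P x + ?N x + ?Z x" for x
    by (cases x "0::real" rule: linorder_cases) (auto simp: indicator_def)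
  have P: "integrable lborel ?P" and N: "integrable lborel ?N" and Z: "integrable lborel ?Z"
    by (rule integrable_mult_indicator; simp add: f)+
  have Z0: "(\<integral>x. ?Z x \<partial>lborel) = 0"
    by (rule integral_eq_zero_AE) (use AE_lborel_singleton[of 0] in \<open>eventually_elim, simp\<close>)
  have "(\<integral>x. ?N x \<partial>lborel) = \<bar>-1::real\<bar> *\<^sub>R (\<integral>x. ?N (0 + (-1) * x) \<partial>lborel)"
    by (rule lborel_integral_real_affine) simp
  also have "(\<lambda>x. ?N (0 + (-1) * x)) = ?P"
    by (rule ext) (simp add: indicator_def even)
  finally have NP: "(\<integral>x. ?N x \<partial>lborel) = (\<integral>x. ?P x \<partial>lborel)" by simp
  have "(\<integral>x. f x \<partial>lborel) = (\<integral>x. ?P x + ?N x + ?Z x \<partial>lborel)"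
    by (subst split) rule
  also have "\<dots> = (\<integral>x. ?P x \<partial>lborel) + (\<integral>x. ?N x \<partial>lborel) + (\<integral>x. ?Z x \<partial>lborel)"
    using P N Z by simp
  also have "\<dots> = 2 *\<^sub>R (\<integral>x. ?P x \<partial>lborel)"
    by (simp add: NP Z0 scaleR_2)
  finally show ?thesis by (simp add: set_lebesgue_integral_def)
qed

lemma set_integral_substitution_sqrt:
  fixes f :: "real \<Rightarrow> 'a::euclidean_space"
  assumes f: "f \<in> borel_measurable lborel" "set_integrable lborel {0<..} f"
  shows "set_integrable lborel {0<..} (\<lambda>y. y powr (-1/2) *\<^sub>R f (sqrt y))"
    and "(LINT y:{0<..}|lborel. y powr (-1/2) *\<^sub>R f (sqrt y)) = 2 *\<^sub>R (LINT x:{0<..}|lborel. f x)"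
proof -
  define S :: "real set" where "S = {0<..}"
  define g where "g y = y powr (-1/2) *\<^sub>R f (sqrt y)" for y
  have g_measurable: "g \<in> borel_measurable lborel"
    unfolding g_def using f(1) by measurable
  have square_S: "(\<lambda>x. x\<^sup>2) ` S = S"
  proof
    show "(\<lambda>x. x\<^sup>2) ` S \<subseteq> S" by (auto simp: S_def)
    show "S \<subseteq> (\<lambda>x. x\<^sup>2) ` S"
    proof
      fix y assume "y \<in> S"
      then have "y = (sqrt y)\<^sup>2" "sqrt y \<in> S" by (auto simp: S_def)
      then show "y \<in> (\<lambda>x. x\<^sup>2) ` S" by blast
    qed
  qed
  have deriv: "((\<lambda>x. x\<^sup>2) has_field_derivative 2 * x) (at x within S)" for x :: real
    by (auto intro!: derivative_eq_intros)
  have inj: "inj_on (\<lambda>x::real. x\<^sup>2) S"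
    unfolding S_def by (auto simp: inj_on_def power2_eq_iff_nonneg)
  have jacobian: "\<bar>2 * x\<bar> *\<^sub>R g (x\<^sup>2) = 2 *\<^sub>R f x" if "x \<in> S" for x
    using that by (simp add: S_def g_def powr_minus powr_half_sqrt)
  have "set_integrable lebesgue S f"
    using f unfolding S_def set_integrable_def
    by (subst integrable_completion) (auto intro: borel_measurable_indicator)
  then have "(\<lambda>x. \<bar>2 * x\<bar> *\<^sub>R g (x\<^sup>2)) absolutely_integrable_on S"
    by (subst set_integrable_cong[OF refl refl jacobian]) auto
  moreover have "integral S (\<lambda>x. \<bar>2 * x\<bar> *\<^sub>R g (x\<^sup>2)) = 2 *\<^sub>R integral S f"
    by (subst integral_cong[OF jacobian]) auto
  moreover have "S \<in> sets lebesgue" by (simp add: S_def)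
  ultimately have g: "g absolutely_integrable_on S" "integral S g = 2 *\<^sub>R integral S f"
    using has_absolute_integral_change_of_variables_real[OF _ deriv inj, of g "2 *\<^sub>R integral S f"]
    unfolding square_S by auto
  have g_integrable: "set_integrable lborel S g"
    using g(1) g_measurable unfolding S_def set_integrable_def
    by (subst (asm) integrable_completion) (auto intro: borel_measurable_indicator)
  then show "set_integrable lborel {0<..} (\<lambda>y. y powr (-1/2) *\<^sub>R f (sqrt y))"
    unfolding S_def g_def .
  have "(LINT y:S|lborel. g y) = 2 *\<^sub>R (LINT x:S|lborel. f x)"
    using g(2) f(2) g_integrable by (simp add: S_def set_borel_integral_eq_integral)
  then show "(LINT y:{0<..}|lborel. y powr (-1/2) *\<^sub>R f (sqrt y)) = 2 *\<^sub>R (LINT x:{0<..}|lborel. f x)"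
    unfolding S_def g_def .
qed

lemma minner_compose_square:
  fixes Z W V :: "real \<Rightarrow> 'n::finite cmat"
  assumes W_def: "W = (\<lambda>x. exp (- (x\<^sup>2)) *\<^sub>R Z x)"
    and V_def: "V = (\<lambda>y. (y powr (-1/2) * exp (- y)) *\<^sub>R Z (sqrt y))"
    and moments: "\<And>k. integrable lborel (\<lambda>x. x ^ k *\<^sub>R W x)"
    and even: "\<And>x. W (- x) = W x"
    and P: "mpoly_le a P" and Q: "mpoly_le b Q"
  shows "minner W UNIV (\<lambda>x. P (x\<^sup>2)) (\<lambda>x. Q (x\<^sup>2)) = minner V {0<..} P Q"
proof -
  define h where "h x = P (x\<^sup>2) ** W x ** cadj (Q (x\<^sup>2))" for x
  have h: "integrable lborel h"
    unfolding h_def[abs_def]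
    by (rule integrable_mpoly_sandwich[OF moments mpoly_le_compose_square[OF P] mpoly_le_compose_square[OF Q]])
  then have h_half: "set_integrable lborel {0<..} h"
    unfolding set_integrable_def by (rule integrable_mult_indicator[rotated]) simp
  have "minner W UNIV (\<lambda>x. P (x\<^sup>2)) (\<lambda>x. Q (x\<^sup>2)) = (\<integral>x. h x \<partial>lborel)"
    by (simp add: minner_UNIV h_def)
  also have "\<dots> = 2 *\<^sub>R (LINT x:{0<..}|lborel. h x)"
    by (rule lborel_integral_even[OF h]) (simp add: h_def even)
  also have "\<dots> = (LINT y:{0<..}|lborel. y powr (-1/2) *\<^sub>R h (sqrt y))"
    using set_integral_substitution_sqrt(2)[OF borel_measurable_integrable[OF h] h_half] by simp
  also have "\<dots> = minner V {0<..} P Q"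
    unfolding minner_def
    by (rule set_lebesgue_integral_cong)
      (auto simp: h_def W_def V_def matrix_scaleR_left matrix_scaleR_right)
  finally show ?thesis .
qed

lemma minner_even_odd_eq_0:
  assumes W: "\<And>x. W (- x) = W x" and f: "\<And>x. f (- x) = f x" and g: "\<And>x. g (- x) = - g x"
  shows "minner W UNIV f g = 0" and "minner W UNIV g f = 0"
  unfolding minner_UNIV
  by (rule lborel_integral_odd_eq_0; simp add: W f g cadj_uminus matrix_uminus_left matrix_uminus_right)+

section \<open>From orthogonal polynomials for \<open>V\<close> to those for \<open>W\<close>\<close>

definition square_lift_omp ::
    "(nat \<Rightarrow> real \<Rightarrow> 'n::finite cmat) \<Rightarrow> (real \<Rightarrow> 'n cmat) \<Rightarrow> nat \<Rightarrow> real \<Rightarrow> 'n cmat" where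
  "square_lift_omp P W m = (if even m then (\<lambda>x. P (m div 2) (x\<^sup>2)) else odd_omp W (m div 2))"

lemma monic_OMP_square_lift_omp:
  fixes Z W V :: "real \<Rightarrow> 'n::finite cmat"
  assumes W_def: "W = (\<lambda>x. exp (- (x\<^sup>2)) *\<^sub>R Z x)"
    and V_def: "V = (\<lambda>y. (y powr (-1/2) * exp (- y)) *\<^sub>R Z (sqrt y))"
    and moments: "\<And>k. integrable lborel (\<lambda>x. x ^ k *\<^sub>R W x)"
    and pos_def: "AE x in lborel. pos_def_mat (W x)"
    and even: "\<And>x. W (- x) = W x"
    and P: "monic_OMP V {0<..} P"
  shows "monic_OMP W UNIV (square_lift_omp P W)"
  unfolding monic_OMP_def
proof (intro conjI allI impI)
  have P_deg: "mpoly_le n (P n)" for n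
    using P by (simp add: monic_OMP_def monic_deg_imp_mpoly_le)
  fix a b :: nat
  show "monic_deg a (square_lift_omp P W a)"
  proof (cases "even a")
    case True
    then show ?thesis
      using P monic_deg_compose_square[of "a div 2" "P (a div 2)"]
      by (simp add: square_lift_omp_def monic_OMP_def)
  next
    case False
    then show ?thesis
      using monic_deg_odd_omp[of "a div 2" W] by (simp add: square_lift_omp_def)
  qed
  assume "a \<noteq> b"
  then consider
      "even a" "even b" "a div 2 \<noteq> b div 2"
    | "even a" "odd b" | "odd a" "even b"
    | "odd a" "odd b" "a div 2 \<noteq> b div 2"
    by (cases "even a"; cases "even b") (auto elim!: evenE oddE)
  then show "minner W UNIV (square_lift_omp P W a) (square_lift_omp P W b) = 0"
  proof cases
    case 1
    then show ?thesis
      using P minner_compose_square[OF W_def V_def moments even P_deg P_deg]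
      by (simp add: square_lift_omp_def monic_OMP_def)
  next
    case 2
    then show ?thesis
      by (simp add: square_lift_omp_def minner_even_odd_eq_0(1) even odd_omp_uminus)
  next
    case 3
    then show ?thesis
      by (simp add: square_lift_omp_def minner_even_odd_eq_0(2) even odd_omp_uminus)
  next
    case 4
    then show ?thesis
      by (simp add: square_lift_omp_def odd_omp_orthogonal[OF moments pos_def])
  qed
qed

lemma in_DW_laguerre_op:
  fixes Z W V :: "real \<Rightarrow> 'n::finite cmat"
  assumes W_def: "W = (\<lambda>x. exp (- (x\<^sup>2)) *\<^sub>R Z x)"
    and V_def: "V = (\<lambda>y. (y powr (-1/2) * exp (- y)) *\<^sub>R Z (sqrt y))"
    and moments: "\<And>k. integrable lborel (\<lambda>x. x ^ k *\<^sub>R W x)"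
    and pos_def: "AE x in lborel. pos_def_mat (W x)"
    and even: "\<And>x. W (- x) = W x"
    and D_in: "in_DW W UNIV (hermite_op A0 A1)"
  shows "in_DW V {0<..} (laguerre_op A0 A1)"
  unfolding in_DW_def
proof (intro conjI allI impI)
  show "is_mpoly (laguerre_op A0 A1 ! i)" if "i < length (laguerre_op A0 A1)" for i
    using mpoly_le_laguerre_op_coeffs[OF that] is_mpoly_iff_mpoly_le by blast
  fix P n assume P: "monic_OMP V {0<..} P"
  then have "monic_OMP W UNIV (square_lift_omp P W)"
    by (rule monic_OMP_square_lift_omp[OF W_def V_def moments pos_def even])
  with D_in obtain \<Lambda> where "\<forall>x. op_apply (square_lift_omp P W (2 * n)) (hermite_op A0 A1) x
      = \<Lambda> ** square_lift_omp P W (2 * n) x"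
    unfolding in_DW_def by blast
  then have "op_apply (\<lambda>x. P n (x\<^sup>2)) (hermite_op A0 A1) x = \<Lambda> ** P n (x\<^sup>2)" for x
    by (simp add: square_lift_omp_def)
  moreover have "mpoly_le n (P n)"
    using P by (simp add: monic_OMP_def monic_deg_imp_mpoly_le)
  ultimately show "\<exists>\<Lambda>. \<forall>y. op_apply (P n) (laguerre_op A0 A1) y = \<Lambda> ** P n y"
    using laguerre_op_eigen_if_hermite_op_eigen by blast
qed

theorem corollary4p4:
  fixes Z :: "real \<Rightarrow> complex^'n::finite^'n" and A1 A0 :: "complex^'n^'n"
    and W V :: "real \<Rightarrow> complex^'n^'n"
  assumes W_def: "W = (\<lambda>x. exp (- (x ^ 2)) *\<^sub>R Z x)"
    and W_weight: "weight_matrix UNIV W"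
    and W_even: "\<forall>x. W x = W (- x)"
    and V_def: "V = (\<lambda>y. (y powr (-1/2) * exp (- y)) *\<^sub>R Z (sqrt y))"
    and D_in: "in_DW W UNIV [(\<lambda>x. A0), (\<lambda>x. x *\<^sub>R A1), (\<lambda>x. mat 1)]"
  shows "(\<forall>G. is_mpoly G \<longrightarrow> (\<forall>y>0.
            op_apply (\<lambda>x. G (x ^ 2)) [(\<lambda>x. A0), (\<lambda>x. x *\<^sub>R A1), (\<lambda>x. mat 1)] (sqrt y)
          = op_apply G [(\<lambda>y. A0), (\<lambda>y. 2 *\<^sub>R (y *\<^sub>R A1 + mat 1)), (\<lambda>y. (4 * y) *\<^sub>R mat 1)] y))
     \<and> in_DW V {0<..} [(\<lambda>y. A0), (\<lambda>y. 2 *\<^sub>R (y *\<^sub>R A1 + mat 1)), (\<lambda>y. (4 * y) *\<^sub>R mat 1)]"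
proof -
  have moments: "\<And>k. integrable lborel (\<lambda>x. x ^ k *\<^sub>R W x)"
    and pos_def: "AE x in lborel. pos_def_mat (W x)"
    using W_weight by (simp_all add: weight_matrix_def set_integrable_def)
  have even: "\<And>x. W (- x) = W x"
    using W_even by metis
  have "op_apply (\<lambda>x. G (x\<^sup>2)) (hermite_op A0 A1) (sqrt y) = op_apply G (laguerre_op A0 A1) y"
    if "is_mpoly G" "y > 0" for G :: "real \<Rightarrow> 'n cmat" and y
    using that op_apply_hermite_op_compose_square[of _ G A0 A1 "sqrt y"]
    by (auto simp: is_mpoly_iff_mpoly_le)
  then show ?thesis
    using in_DW_laguerre_op[OF W_def V_def moments pos_def even D_in] by blast
qed

end
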